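(* Let $R$ be an associative ring with identity and involution $*$, and let $a\in R^{\#}\cap R^{\dagger}$. Let $\chi_a=\{a,\ a^{\#},\ a^{\dagger},\ a^*,\ (a^{\dagger})^*,\ (a^{\#})^*\}$. Then $a\in R^{SEP}$ if and only if $aa^*a^{\dagger}xx^{\dagger}a\in PE(R)$ for some $x\in\chi_a$.
   Context: An involution on $R$ is a map $x\mapsto x^*$ with $(x^* )^*=x$, $(x+y)^*=x^*+y^*$, $(xy)^*=y^*x^*$. An element $a$ is Moore–Penrose invertible if there is $b$ with $aba=a$, $bab=b$, $(ab)^*=ab$, $(ba)^*=ba$; such $b$ is unique, denoted $a^{\dagger}$, and $R^{\dagger}$ is the set of such $a$ (all elements of $\chi_a$ are Moore–Penrose invertible when $a\in R^{\#}\cap R^{\dagger}$). An element $a$ is group invertible if there is $b$ with $aba=a$, $bab=b$, $ab=ba$; such $b$ is unique, denoted $a^{\#}$, and $R^{\#}$ is the set of such $a$. $PE(R)=\{e\in R: e^2=e=e^*\}$ is the set of projections. For $a\in R^{\#}\cap R^{\dagger}$, $a$ is SEP if $a^*=a^{\dagger}=a^{\#}$; $R^{SEP}$ denotes the set of SEP elements. *)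

theory Defs
  imports Main
begin

definition involution :: "('a::ring_1 \<Rightarrow> 'a) \<Rightarrow> bool" where
  "involution st \<longleftrightarrow> (\<forall>x. st (st x) = x) \<and> (\<forall>x y. st (x + y) = st x + st y)
      \<and> (\<forall>x y. st (x * y) = st y * st x)"

definition is_MP_inverse :: "('a::ring_1 \<Rightarrow> 'a) \<Rightarrow> 'a \<Rightarrow> 'a \<Rightarrow> bool" where
  "is_MP_inverse st a b \<longleftrightarrow> a * b * a = a \<and> b * a * b = b \<and> st (a * b) = a * b \<and> st (b * a) = b * a"

definition MP_invertible :: "('a::ring_1 \<Rightarrow> 'a) \<Rightarrow> 'a \<Rightarrow> bool" where
  "MP_invertible st a \<longleftrightarrow> (\<exists>b. is_MP_inverse st a b)"

definition MP_inv :: "('a::ring_1 \<Rightarrow> 'a) \<Rightarrow> 'a \<Rightarrow> 'a" where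
  "MP_inv st a = (THE b. is_MP_inverse st a b)"

definition is_group_inverse :: "'a::ring_1 \<Rightarrow> 'a \<Rightarrow> bool" where
  "is_group_inverse a b \<longleftrightarrow> a * b * a = a \<and> b * a * b = b \<and> a * b = b * a"

definition group_invertible :: "'a::ring_1 \<Rightarrow> bool" where
  "group_invertible a \<longleftrightarrow> (\<exists>b. is_group_inverse a b)"

definition group_inv :: "'a::ring_1 \<Rightarrow> 'a" where
  "group_inv a = (THE b. is_group_inverse a b)"

definition projection :: "('a::ring_1 \<Rightarrow> 'a) \<Rightarrow> 'a \<Rightarrow> bool" where
  "projection st e \<longleftrightarrow> e * e = e \<and> e = st e"

definition SEP :: "('a::ring_1 \<Rightarrow> 'a) \<Rightarrow> 'a \<Rightarrow> bool" where
  "SEP st a \<longleftrightarrow> group_invertible a \<and> MP_invertible st a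
      \<and> st a = MP_inv st a \<and> MP_inv st a = group_inv a"

definition chi :: "('a::ring_1 \<Rightarrow> 'a) \<Rightarrow> 'a \<Rightarrow> 'a set" where
  "chi st a = {a, group_inv a, MP_inv st a, st a, st (MP_inv st a), st (group_inv a)}"

end

theory Submission
  imports Defs
begin

text \<open>
  Write \<open>a\<^sup>\<dagger>\<close> for the Moore-Penrose and \<open>a\<^sup>#\<close> for the group inverse. For every
  \<open>x \<in> \<chi>\<^sub>a\<close> the projection \<open>x x\<^sup>\<dagger>\<close> is \<open>a a\<^sup>\<dagger>\<close> or \<open>a\<^sup>\<dagger> a\<close>, so the element in question is
  \<open>p = a a\<^sup>* a\<^sup>\<dagger> w a\<close> with \<open>w \<in> {a a\<^sup>\<dagger>, a\<^sup>\<dagger> a}\<close>. Since \<open>p = a a\<^sup>\<dagger> p\<close>, self-adjointness gives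
  \<open>p (1 - a a\<^sup>\<dagger>) = 0\<close>. The left factor \<open>a a\<^sup>*\<close> can be cancelled in such equations, and so can
  \<open>a\<^sup>\<dagger>\<close> in front of \<open>a\<^sup>\<dagger>\<close>, because \<open>a\<^sup>\<dagger> = (a\<^sup>#)\<^sup>* a\<^sup>* a\<^sup>\<dagger>\<close>. This leaves \<open>a = a\<^sup>2 a\<^sup>\<dagger>\<close>, which
  forces \<open>a\<^sup># a = a a\<^sup>\<dagger> = a\<^sup>\<dagger> a\<close>, i.e. \<open>a\<^sup># = a\<^sup>\<dagger>\<close>. Then \<open>p = a a\<^sup>*\<close>, and \<open>a a\<^sup>*\<close> being a
  projection makes \<open>a\<^sup>*\<close> a Moore-Penrose inverse of \<open>a\<close>.
\<close>

lemma is_group_inverse_unique: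
  assumes B: "is_group_inverse a b" and C: "is_group_inverse a c"
  shows "b = c"
proof -
  from B have b1: "a*b*a = a" and b2: "b*a*b = b" and b3: "a*b = b*a"
    by (auto simp: is_group_inverse_def)
  from C have c1: "a*c*a = a" and c2: "c*a*c = c" and c3: "a*c = c*a"
    by (auto simp: is_group_inverse_def)
  have ba: "b*a = c*a"
  proof -
    have "b*a = (a*c*a)*b" using b3 c1 by simp
    also have "\<dots> = (a*c)*(a*b)" by (simp only: mult.assoc)
    also have "\<dots> = (c*a)*(b*a)" by (simp only: b3 c3)
    also have "\<dots> = c*(a*b*a)" by (simp only: mult.assoc)
    finally show ?thesis using b1 by simp
  qed
  have "b = b*(a*b)" using b2 by (simp only: mult.assoc)
  also have "\<dots> = b*(c*a)" by (simp only: b3 ba)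
  also have "\<dots> = b*(a*c)" by (simp only: c3)
  also have "\<dots> = (b*a)*c" by (simp only: mult.assoc)
  also have "\<dots> = c" using ba c2 by simp
  finally show ?thesis .
qed

lemma group_inv_eqI: "is_group_inverse a b \<Longrightarrow> group_inv a = b"
  unfolding group_inv_def using is_group_inverse_unique by blast

lemma is_group_inverse_mult_self:
  assumes "is_group_inverse a g"
  shows "a * a * g = a" "g * a * a = a" "g * g * a = g" "a * g * g = g"
proof -
  from assms have g1: "a*g*a = a" and g2: "g*a*g = g" and g3: "a*g = g*a"
    by (auto simp: is_group_inverse_def)
  have "a * a * g = a * (g * a)" by (simp only: mult.assoc g3)
  then show "a * a * g = a" using g1 by (simp only: mult.assoc)
  show "g * a * a = a" using g1 by (simp only: g3)
  show "g * g * a = g" using g2 g3 by (simp only: mult.assoc)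
  show "a * g * g = g" using g2 by (simp only: g3)
qed

lemma is_MP_inverse_swap: "is_MP_inverse st a b \<Longrightarrow> is_MP_inverse st b a"
  by (auto simp: is_MP_inverse_def)

lemma projection_mult_MP_inverse: "is_MP_inverse st a b \<Longrightarrow> projection st (a * b)"
  by (auto simp: is_MP_inverse_def projection_def mult.assoc)

lemma MP_projections_fix_group_inverse:
  assumes B: "is_MP_inverse st a b" and G: "is_group_inverse a g"
  shows "a * b * g = g" "g * b * a = g"
proof -
  from B have b1: "a*b*a = a" by (simp add: is_MP_inverse_def)
  note g = is_group_inverse_mult_self[OF G]
  have "a * b * g = a * b * (a * g * g)" by (simp only: g(4))
  also have "\<dots> = (a * b * a) * g * g" by (simp only: mult.assoc)
  finally show "a * b * g = g" by (simp only: b1 g(4))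
  have "g * b * a = (g * g * a) * b * a" by (simp only: g(3))
  also have "\<dots> = g * g * (a * b * a)" by (simp only: mult.assoc)
  finally show "g * b * a = g" by (simp only: b1 g(3))
qed

lemma mult_MP_inverse_of_group_inverse:
  assumes B: "is_MP_inverse st a b" and G: "is_group_inverse a g"
  shows "g * (b*a*a*a*b) = a*b" "(b*a*a*a*b) * g = b*a"
proof -
  note g = is_group_inverse_mult_self[OF G] and fix_g = MP_projections_fix_group_inverse[OF B G]
  have "g * (b*a*a*a*b) = (g*b*a)*a*a*b" by (simp only: mult.assoc)
  also have "\<dots> = g*a*a*b" by (simp only: fix_g(2))
  finally show "g * (b*a*a*a*b) = a*b" by (simp only: g(2))
  have "(b*a*a*a*b) * g = b*a*a*(a*b*g)" by (simp only: mult.assoc)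
  also have "\<dots> = b*a*a*g" by (simp only: fix_g(1))
  also have "\<dots> = b*(a*a*g)" by (simp only: mult.assoc)
  finally show "(b*a*a*a*b) * g = b*a" by (simp only: g(1))
qed

lemma is_MP_inverse_group_inverse:
  assumes B: "is_MP_inverse st a b" and G: "is_group_inverse a g"
  shows "is_MP_inverse st g (b*a*a*a*b)"
proof -
  note gy = mult_MP_inverse_of_group_inverse(1)[OF B G]
   and yg = mult_MP_inverse_of_group_inverse(2)[OF B G]
  from B have b2: "b*a*b = b" and b3: "st (a*b) = a*b" and b4: "st (b*a) = b*a"
    by (auto simp: is_MP_inverse_def)
  have "g*(b*a*a*a*b)*g = g"
    using gy MP_projections_fix_group_inverse(1)[OF B G] by simp
  moreover have "(b*a*a*a*b)*g*(b*a*a*a*b) = b*a*a*a*b"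
  proof -
    have "(b*a*a*a*b)*g*(b*a*a*a*b) = (b*a)*(b*a*a*a*b)" by (simp only: yg)
    also have "\<dots> = (b*a*b)*a*a*a*b" by (simp only: mult.assoc)
    finally show ?thesis by (simp only: b2)
  qed
  ultimately show ?thesis
    using gy yg b3 b4 by (simp add: is_MP_inverse_def)
qed

locale ring_with_involution =
  fixes st :: "'a::ring_1 \<Rightarrow> 'a"
  assumes involution: "involution st"
begin

lemma st_st [simp]: "st (st x) = x"
  using involution by (simp add: involution_def)

lemma st_mult: "st (x * y) = st y * st x"
  using involution by (simp add: involution_def)

lemma is_MP_inverse_unique:
  assumes B: "is_MP_inverse st a b" and C: "is_MP_inverse st a c"
  shows "b = c"
proof -
  from B have b1: "a*b*a = a" and b2: "b*a*b = b" and b3: "st (a*b) = a*b" and b4: "st (b*a) = b*a"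
    by (auto simp: is_MP_inverse_def)
  from C have c1: "a*c*a = a" and c2: "c*a*c = c" and c3: "st (a*c) = a*c" and c4: "st (c*a) = c*a"
    by (auto simp: is_MP_inverse_def)
  have ab: "a*b = a*c"
  proof -
    have "a*b = st ((a*c*a)*b)" using b3 c1 by simp
    also have "\<dots> = st (a*b) * st (a*c)" by (simp only: st_mult mult.assoc)
    also have "\<dots> = (a*b*a)*c" using b3 c3 by (simp only: mult.assoc)
    finally show ?thesis using b1 by simp
  qed
  have ba: "b*a = c*a"
  proof -
    have "b*a = st (b*(a*c*a))" using b4 c1 by simp
    also have "\<dots> = st (c*a) * st (b*a)" by (simp only: st_mult mult.assoc)
    also have "\<dots> = c*(a*b*a)" using b4 c4 by (simp only: mult.assoc)
    finally show ?thesis using b1 by simp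
  qed
  have "b = b*(a*c)" using b2 ab by (simp only: mult.assoc)
  also have "\<dots> = (b*a)*c" by (simp only: mult.assoc)
  also have "\<dots> = (c*a)*c" by (simp only: ba)
  also have "\<dots> = c" using c2 by simp
  finally show ?thesis .
qed

lemma MP_inv_eqI: "is_MP_inverse st a b \<Longrightarrow> MP_inv st a = b"
  unfolding MP_inv_def using is_MP_inverse_unique by blast

lemma is_MP_inverse_st:
  assumes "is_MP_inverse st a b"
  shows "is_MP_inverse st (st a) (st b)"
proof -
  from assms have b1: "a*b*a = a" and b2: "b*a*b = b" and b3: "st (a*b) = a*b" and b4: "st (b*a) = b*a"
    by (auto simp: is_MP_inverse_def)
  have "st a * st b * st a = st (a*b*a)" "st b * st a * st b = st (b*a*b)"
    by (simp_all only: st_mult mult.assoc)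
  moreover have "st a * st b = b * a" "st b * st a = a * b"
    using b3 b4 by (simp_all only: st_mult)
  ultimately show ?thesis
    using b1 b2 b3 b4 by (simp add: is_MP_inverse_def)
qed

lemma MP_inverse_absorb_st:
  assumes "is_MP_inverse st a b"
  shows "st a * a * b = st a" "b * a * st a = st a" "b * st b * st a = b"
proof -
  from assms have b1: "a*b*a = a" and b2: "b*a*b = b" and b3: "st (a*b) = a*b" and b4: "st (b*a) = b*a"
    by (auto simp: is_MP_inverse_def)
  have "st a * a * b = st a * st (a*b)" using b3 by (simp only: mult.assoc)
  also have "\<dots> = st (a*b*a)" by (simp only: st_mult)
  finally show "st a * a * b = st a" using b1 by simp
  have "b * a * st a = st (b*a) * st a" using b4 by simp
  also have "\<dots> = st (a*(b*a))" by (simp only: st_mult)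
  finally show "b * a * st a = st a" using b1 by (simp only: mult.assoc)
  have "b * st b * st a = b * st (a*b)" by (simp only: st_mult mult.assoc)
  also have "\<dots> = b*a*b" using b3 by (simp only: mult.assoc)
  finally show "b * st b * st a = b" using b2 by simp
qed

lemma MP_inverse_mult_eq_0_iff:
  assumes "is_MP_inverse st a b"
  shows "b * u = 0 \<longleftrightarrow> st a * u = 0"
proof -
  note absorb = MP_inverse_absorb_st[OF assms]
  have "st a * u = st a * a * (b * u)" using absorb(1) by (simp flip: mult.assoc)
  moreover have "b * u = b * st b * (st a * u)" using absorb(3) by (simp flip: mult.assoc)
  ultimately show ?thesis by auto
qed

lemma MP_inverse_mult_eq_0_if_mult_st:
  assumes B: "is_MP_inverse st a b" and "a * st a * u = 0"
  shows "b * u = 0"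
proof -
  have "st a * u = b * (a * st a * u)"
    using MP_inverse_absorb_st(2)[OF B] by (simp flip: mult.assoc)
  then show ?thesis using assms(2) MP_inverse_mult_eq_0_iff[OF B] by simp
qed

lemma MP_inverse_mult_eq_0_if_square:
  assumes B: "is_MP_inverse st a b" and G: "is_group_inverse a g" and "b * b * u = 0"
  shows "b * u = 0"
proof -
  have "b = st a * st b * b"
    using B by (simp add: is_MP_inverse_def flip: st_mult)
  also have "\<dots> = st (a * a * g) * st b * b"
    using is_group_inverse_mult_self(1)[OF G] by simp
  also have "\<dots> = st g * st a * (st a * st b * b)"
    by (simp only: st_mult mult.assoc)
  finally have "b = st g * st a * b"
    using B by (simp add: is_MP_inverse_def flip: st_mult)
  moreover have "st a * (b * u) = 0"
    using assms(3) MP_inverse_mult_eq_0_iff[OF B, of "b * u"] by (simp add: mult.assoc)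
  ultimately show ?thesis
    by (metis mult.assoc mult_zero_right)
qed

lemma group_inverse_eq_MP_inverse:
  assumes B: "is_MP_inverse st a b" and G: "is_group_inverse a g" and "a * a * b = a"
  shows "g = b"
proof -
  from B have b1: "a*b*a = a" and b2: "b*a*b = b" and b3: "st (a*b) = a*b" and b4: "st (b*a) = b*a"
    by (auto simp: is_MP_inverse_def)
  have ga: "g*a = a*b"
  proof -
    have "g*a = (g*a*a)*b" using assms(3) by (simp only: mult.assoc)
    then show ?thesis by (simp only: is_group_inverse_mult_self(2)[OF G])
  qed
  have st_ga: "st (g*a) = g*a" using ga b3 by simp
  have "g*a = st (g*a*(b*a))" using st_ga b1 by (simp add: mult.assoc)
  also have "\<dots> = b*a*(g*a)" using st_ga b4 by (simp add: st_mult)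
  also have "\<dots> = b*a" using G by (simp add: is_group_inverse_def mult.assoc)
  finally have "a*b = b*a" using ga by simp
  then have "is_group_inverse a b" using b1 b2 by (simp add: is_group_inverse_def)
  then show ?thesis using G is_group_inverse_unique by blast
qed

lemma st_eq_MP_inverse_if_projection:
  assumes B: "is_MP_inverse st a b" and "projection st (a * st a)"
  shows "b = st a"
proof -
  have "a * st a * (a * st a - 1) = 0"
    using assms(2) by (simp add: projection_def algebra_simps)
  then have "st a * (a * st a - 1) = 0"
    using MP_inverse_mult_eq_0_if_mult_st[OF B] MP_inverse_mult_eq_0_iff[OF B] by blast
  then have sas: "st a * a * st a = st a"
    by (simp add: algebra_simps)
  then have "a * st a * a = a"
    by (metis st_mult st_st mult.assoc)
  then have "is_MP_inverse st a (st a)"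
    using sas by (simp add: is_MP_inverse_def st_mult)
  then show ?thesis using is_MP_inverse_unique[OF B] by blast
qed

lemma mult_MP_inv_chi:
  assumes B: "is_MP_inverse st a b" and G: "is_group_inverse a g" and "x \<in> chi st a"
  shows "x * MP_inv st x \<in> {a * b, b * a}"
proof -
  note gy = mult_MP_inverse_of_group_inverse[OF B G]
  note B' = is_MP_inverse_swap[OF B] and Y = is_MP_inverse_group_inverse[OF B G]
  from B have b3: "st (a*b) = a*b" and b4: "st (b*a) = b*a"
    by (auto simp: is_MP_inverse_def)
  have "x \<in> {a, g, b, st a, st b, st g}"
    using assms(3) by (simp add: chi_def MP_inv_eqI[OF B] group_inv_eqI[OF G])
  then consider "x = a" | "x = g" | "x = b" | "x = st a" | "x = st b" | "x = st g" by blast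
  then show ?thesis
  proof cases
    case 4
    then show ?thesis using MP_inv_eqI[OF is_MP_inverse_st[OF B]] b4 by (simp add: st_mult)
  next
    case 5
    then show ?thesis using MP_inv_eqI[OF is_MP_inverse_st[OF B']] b3 by (simp add: st_mult)
  next
    case 6
    then show ?thesis using MP_inv_eqI[OF is_MP_inverse_st[OF Y]] gy(2) b4
      by (simp flip: st_mult)
  qed (use MP_inv_eqI[OF B] MP_inv_eqI[OF B'] MP_inv_eqI[OF Y] gy(1) in simp_all)
qed

lemma mult_mult_MP_inverse_if_projection:
  assumes B: "is_MP_inverse st a b" and G: "is_group_inverse a g"
    and w: "w \<in> {a * b, b * a}" and P: "projection st (a * st a * b * w * a)"
  shows "a * a * b = a"
proof -
  define p where "p = a * st a * b * w * a"
  define v where "v = 1 - a * b"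
  from B have b1: "a*b*a = a" and b3: "st (a*b) = a*b"
    by (auto simp: is_MP_inverse_def)
  have sp: "st p = p" using P by (simp add: p_def projection_def)
  have "p = (a * b * a) * st a * b * w * a" unfolding p_def by (simp only: b1)
  then have abp: "a * b * p = p" unfolding p_def by (simp only: mult.assoc)
  have "p * (a * b) = st p * st (a * b)" using sp b3 by simp
  also have "\<dots> = st (a * b * p)" by (simp only: st_mult)
  finally have "p * (a * b) = p" using abp sp by simp
  then have "a * st a * (b * w * a * v) = 0"
    by (simp add: p_def v_def algebra_simps)
  then have "b * b * (w * a * v) = 0"
    using MP_inverse_mult_eq_0_if_mult_st[OF B] by (simp add: mult.assoc)
  then have bw: "b * (w * a * v) = 0"
    by (rule MP_inverse_mult_eq_0_if_square[OF B G])
  have "a * v = 0"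
    using w
  proof
    assume w_ab: "w = a * b"
    have "b * (a * v) = b * (w * a * v)" by (simp only: w_ab b1)
    then have "b * (a * v) = 0" using bw by simp
    then show "a * v = 0" using b1 by (metis mult.assoc mult_zero_right)
  next
    assume "w \<in> {b * a}"
    then have "b * b * (a * a * v) = 0" using bw by (simp add: mult.assoc)
    then have "b * (a * a * v) = 0" by (rule MP_inverse_mult_eq_0_if_square[OF B G])
    then have "a * a * v = 0" using b1 by (metis mult.assoc mult_zero_right)
    then show "a * v = 0"
      using is_group_inverse_mult_self(2)[OF G] by (metis mult.assoc mult_zero_right)
  qed
  then show ?thesis by (simp add: v_def algebra_simps)
qed

lemma EP_chi_product_eq:
  assumes B: "is_MP_inverse st a b" and "a * b = b * a" and "w \<in> {a * b, b * a}"
  shows "a * st a * b * w * a = a * st a"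
proof -
  have w: "w = a * b" using assms(2,3) by auto
  have "st a * b * a = st a * a * b" by (simp only: mult.assoc assms(2))
  then have sba: "st a * b * a = st a" by (simp only: MP_inverse_absorb_st(1)[OF B])
  have "a * st a * b * w * a = a * (st a * b * a) * (b * a)" by (simp only: w mult.assoc)
  also have "\<dots> = a * st a * (b * a)" by (simp only: sba)
  also have "\<dots> = a * (st a * b * a)" by (simp only: mult.assoc)
  finally show ?thesis by (simp only: sba)
qed

end

theorem corollary2p4:
  fixes st :: "'a::ring_1 \<Rightarrow> 'a" and a :: 'a
  assumes "involution st"
    and "group_invertible a" and "MP_invertible st a"
  shows "SEP st a \<longleftrightarrow>
    (\<exists>x\<in>chi st a. projection st (a * st a * MP_inv st a * x * MP_inv st x * a))"
proof -
  interpret ring_with_involution st by unfold_locales (fact assms(1))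
  obtain b where B: "is_MP_inverse st a b" using assms(3) MP_invertible_def by blast
  obtain g where G: "is_group_inverse a g" using assms(2) group_invertible_def by blast
  have b: "MP_inv st a = b" and g: "group_inv a = g"
    using MP_inv_eqI[OF B] group_inv_eqI[OF G] .
  have p: "a * st a * MP_inv st a * x * MP_inv st x * a = a * st a * b * (x * MP_inv st x) * a" for x
    by (simp add: b mult.assoc)
  show ?thesis
  proof
    assume "SEP st a"
    then have "g = b" "st a = b" by (simp_all add: SEP_def b g)
    then have "projection st (a * st a * b * (a * b) * a)"
      using EP_chi_product_eq[OF B] G projection_mult_MP_inverse[OF B]
      by (simp add: is_group_inverse_def)
    then have "projection st (a * st a * MP_inv st a * a * MP_inv st a * a)"
      by (simp only: b mult.assoc)
    then show "\<exists>x\<in>chi st a. projection st (a * st a * MP_inv st a * x * MP_inv st x * a)"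
      by (auto simp: chi_def)
  next
    assume "\<exists>x\<in>chi st a. projection st (a * st a * MP_inv st a * x * MP_inv st x * a)"
    then obtain x where x: "x \<in> chi st a"
      and P: "projection st (a * st a * b * (x * MP_inv st x) * a)"
      by (auto simp: p)
    note w = mult_MP_inv_chi[OF B G x]
    have "g = b"
      using group_inverse_eq_MP_inverse[OF B G] mult_mult_MP_inverse_if_projection[OF B G w P] .
    then have "st a = b"
      using P EP_chi_product_eq[OF B _ w] st_eq_MP_inverse_if_projection[OF B] G
      by (simp add: is_group_inverse_def)
    then show "SEP st a" using assms(2,3) \<open>g = b\<close> by (simp add: SEP_def b g)
  qed
qed

end
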